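(* Let $H$ be a complex Hilbert space and $\{\mathcal{U}(t)\}_{t\geq 0}$ a strongly continuous semigroup on $H$ with generator $\mathcal{L}$. Let $z\in D(\mathcal{L})\cap D(\mathcal{L}^\dagger)$ with $z\neq0$, $\mathcal{P}:=(\cdot,z)(z,z)^{-1}z$, $\mathcal{Q}:=1-\mathcal{P}$. Let $K:\mathbb{R}_+\to\mathbb{C}$ be the unique continuous solution of $$K(t)=(\mathcal{U}(t)\mathcal{QL}z,\mathcal{Q}\mathcal{L}^\dagger z)(z,z)^{-1}-\int_0^tK(t-s)\,(\mathcal{U}(s)z,\mathcal{Q}\mathcal{L}^\dagger z)(z,z)^{-1}\,ds,$$ and let $\eta_t:=\mathcal{U}(t)\mathcal{QL}z-\int_0^tK(t-s)\,\mathcal{U}(s)z\,ds$. Then $(\eta_t,z)=0$ for all $t\ge0$.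
   Context: The scalar product $(\cdot,\cdot)$ on $H$ is conjugate-linear in its second argument. The generator is $\mathcal{L}x:=\lim_{h\searrow 0}\frac1h[\mathcal{U}(h)x-x]$ on the set $D(\mathcal{L})$ where the limit exists; $\dagger$ denotes the adjoint. Vector-valued integrals are Bochner integrals. *)

theory Defs
  imports "HOL-Analysis.Analysis"
begin

text \<open>The distribution has no complex vector spaces /
complex inner products, so we introduce them as a type class: a real Banach space
with a complex scalar multiplication extending the real one, and a complex inner
product, linear in the first and conjugate-linear in the second argument, which
induces the norm.\<close>

class complex_hilbert = banach +
  fixes scaleC :: "complex \<Rightarrow> 'a \<Rightarrow> 'a" (infixr \<open>*\<^sub>C\<close> 75)
    and cinner :: "'a \<Rightarrow> 'a \<Rightarrow> complex"
  assumes scaleC_add_right: "a *\<^sub>C (x + y) = a *\<^sub>C x + a *\<^sub>C y"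
    and scaleC_add_left: "(a + b) *\<^sub>C x = a *\<^sub>C x + b *\<^sub>C x"
    and scaleC_scaleC: "a *\<^sub>C (b *\<^sub>C x) = (a * b) *\<^sub>C x"
    and scaleC_one: "1 *\<^sub>C x = x"
    and scaleR_scaleC: "r *\<^sub>R x = complex_of_real r *\<^sub>C x"
    and cinner_add_left: "cinner (x + y) w = cinner x w + cinner y w"
    and cinner_scaleC_left: "cinner (a *\<^sub>C x) y = a * cinner x y"
    and cinner_commute: "cinner x y = cnj (cinner y x)"
    and cinner_self_nonneg: "0 \<le> Re (cinner x x)"
    and cinner_self_real: "Im (cinner x x) = 0"
    and cinner_self_eq_zero: "cinner x x = 0 \<longleftrightarrow> x = 0"
    and norm_eq_sqrt_cinner: "norm x = sqrt (Re (cinner x x))"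

definition bounded_clinear_op :: "('a::complex_hilbert \<Rightarrow> 'a) \<Rightarrow> bool" where
  "bounded_clinear_op T \<longleftrightarrow>
     (\<forall>x y. T (x + y) = T x + T y) \<and> (\<forall>c x. T (c *\<^sub>C x) = c *\<^sub>C T x) \<and>
     (\<exists>C. \<forall>x. norm (T x) \<le> C * norm x)"

text \<open>Strongly continuous semigroup \<open>{U t}\<^sub>t\<^sub>\<ge>\<^sub>0\<close> (only \<open>t \<ge> 0\<close> matters).\<close>
definition strongly_continuous_semigroup :: "(real \<Rightarrow> 'a::complex_hilbert \<Rightarrow> 'a) \<Rightarrow> bool" where
  "strongly_continuous_semigroup U \<longleftrightarrow>
     (\<forall>t\<ge>0. bounded_clinear_op (U t)) \<and>
     U 0 = id \<and>
     (\<forall>s\<ge>0. \<forall>t\<ge>0. U (s + t) = U s \<circ> U t) \<and>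
     (\<forall>x. continuous_on {0..} (\<lambda>t. U t x))"

definition gen_dom :: "(real \<Rightarrow> 'a::complex_hilbert \<Rightarrow> 'a) \<Rightarrow> 'a set" where
  "gen_dom U = {x. \<exists>y. ((\<lambda>h. (1 / h) *\<^sub>R (U h x - x)) \<longlongrightarrow> y) (at_right 0)}"

definition gen :: "(real \<Rightarrow> 'a::complex_hilbert \<Rightarrow> 'a) \<Rightarrow> 'a \<Rightarrow> 'a" where
  "gen U x = Lim (at_right 0) (\<lambda>h. (1 / h) *\<^sub>R (U h x - x))"

definition gen_adj_dom :: "(real \<Rightarrow> 'a::complex_hilbert \<Rightarrow> 'a) \<Rightarrow> 'a set" where
  "gen_adj_dom U = {y. \<exists>w. \<forall>x\<in>gen_dom U. cinner (gen U x) y = cinner x w}"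

definition gen_adj :: "(real \<Rightarrow> 'a::complex_hilbert \<Rightarrow> 'a) \<Rightarrow> 'a \<Rightarrow> 'a" where
  "gen_adj U y = (SOME w. \<forall>x\<in>gen_dom U. cinner (gen U x) y = cinner x w)"

definition projP :: "'a::complex_hilbert \<Rightarrow> 'a \<Rightarrow> 'a" where
  "projP z x = (cinner x z / cinner z z) *\<^sub>C z"

definition projQ :: "'a::complex_hilbert \<Rightarrow> 'a \<Rightarrow> 'a" where
  "projQ z x = x - projP z x"

end

(*
  Fix T and put h t = (U t QLz, z)/(z,z) and g t = (U t z, z)/(z,z). For z in the domain of the
  adjoint generator, t \<mapsto> (U t x, z) is differentiable with derivative (U t x, L\<dagger>z) for every x
  (not only x in the domain of L: integrate the orbit first). Splitting L\<dagger>z = QL\<dagger>z + PL\<dagger>z, h and g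
  solve linear equations y' = a + \<beta> y and y' = c + \<beta> y with the same \<beta>, h 0 = 0 and g 0 = 1, where a
  and c are exactly the two inhomogeneities of the Volterra equation for K. Differentiating the
  convolution K * g and using that equation shows that K * g solves the same initial value problem as
  h, so h = K * g on [0, T], which is (\<eta> T, z) = 0.
*)

theory Submission
  imports Defs
begin

section \<open>Complex inner product spaces\<close>

lemma cinner_zero_left [simp]: "cinner 0 y = 0"
  using cinner_add_left[of 0 0 y] by simp

lemma cinner_minus_left: "cinner (- x) y = - cinner x y"
  using cinner_add_left[of x "- x" y] by (simp add: eq_neg_iff_add_eq_0 add.commute)

lemma cinner_diff_left: "cinner (x - y) w = cinner x w - cinner y w"
  using cinner_add_left[of x "- y" w] by (simp add: cinner_minus_left)

lemma cinner_zero_right [simp]: "cinner x 0 = 0"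
  using cinner_commute[of x 0] by simp

lemma cinner_diff_right: "cinner x (y - w) = cinner x y - cinner x w"
  by (metis cinner_commute cinner_diff_left complex_cnj_diff)

lemma cinner_scaleC_right: "cinner x (a *\<^sub>C y) = cnj a * cinner x y"
  by (metis cinner_commute cinner_scaleC_left complex_cnj_mult)

lemma cinner_scaleR_left: "cinner (r *\<^sub>R x) y = of_real r * cinner x y"
  by (simp add: scaleR_scaleC cinner_scaleC_left)

lemma cinner_self_eq_power2_norm: "cinner x x = of_real ((norm x)\<^sup>2)"
  using cinner_self_real[of x] cinner_self_nonneg[of x]
  by (simp add: norm_eq_sqrt_cinner complex_eq_iff)

lemma norm_scaleC: "norm (a *\<^sub>C x) = cmod a * norm x"
proof -
  have "cinner (a *\<^sub>C x) (a *\<^sub>C x) = (a * cnj a) * cinner x x"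
    by (simp add: cinner_scaleC_left cinner_scaleC_right)
  then have "(norm (a *\<^sub>C x))\<^sup>2 = (cmod a * norm x)\<^sup>2"
    by (simp add: cinner_self_eq_power2_norm complex_norm_square[symmetric] power_mult_distrib
        del: of_real_power) (metis of_real_eq_iff of_real_mult)
  then show ?thesis
    by (simp add: power2_eq_iff_nonneg)
qed

lemma bounded_bilinear_scaleC: "bounded_bilinear (\<lambda>a (x::'a::complex_hilbert). a *\<^sub>C x)"
proof (rule bounded_bilinear.intro)
  show "\<exists>K. \<forall>a (x::'a). norm (a *\<^sub>C x) \<le> norm a * norm x * K"
    by (rule exI[of _ 1]) (simp add: norm_scaleC)
qed (simp_all add: scaleC_add_left scaleC_add_right scaleR_scaleC scaleC_scaleC scaleR_conv_of_real
    mult.commute)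

lemma cinner_Cauchy_Schwarz: "cmod (cinner x y) \<le> norm x * norm y"
proof (cases "y = 0")
  case False
  define a where "a = cinner x y"
  define Y where "Y = (norm y)\<^sup>2"
  have "Y > 0"
    using False by (simp add: Y_def)
  define l where "l = a / of_real Y"
  \<comment> \<open>Pythagoras for the component of \<open>x\<close> orthogonal to \<open>y\<close>.\<close>
  have "cinner (x - l *\<^sub>C y) (x - l *\<^sub>C y) = cinner x x - of_real ((cmod a)\<^sup>2 / Y)"
  proof -
    have "cinner (x - l *\<^sub>C y) (x - l *\<^sub>C y) = cinner x x - cnj l * a - l * cnj a + l * cnj l * of_real Y"
      by (simp add: cinner_diff_left cinner_diff_right cinner_scaleC_left cinner_scaleC_right
          cinner_self_eq_power2_norm[of y, folded Y_def] cinner_commute[of y x] a_def algebra_simps)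
    also have "\<dots> = cinner x x - a * cnj a / of_real Y"
      using \<open>Y > 0\<close> by (simp add: l_def field_simps)
    finally show ?thesis
      by (simp add: complex_norm_square[symmetric] del: of_real_power)
  qed
  then have "(cmod a)\<^sup>2 / Y \<le> (norm x)\<^sup>2"
    using cinner_self_nonneg[of "x - l *\<^sub>C y"] by (simp add: cinner_self_eq_power2_norm)
  then have "(cmod a)\<^sup>2 \<le> (norm x * norm y)\<^sup>2"
    using \<open>Y > 0\<close> by (simp add: Y_def pos_divide_le_eq power_mult_distrib)
  then show ?thesis
    unfolding a_def by (rule power2_le_imp_le) simp
qed simp

lemma bounded_linear_cinner_left: "bounded_linear (\<lambda>x. cinner x y)"
proof (rule bounded_linear_intro[of _ "norm y"])
  show "norm (cinner x y) \<le> norm x * norm y" for x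
    using cinner_Cauchy_Schwarz[of x y] by simp
qed (simp_all add: cinner_add_left cinner_scaleR_left scaleR_conv_of_real)

lemma cinner_integral_left:
  assumes "f integrable_on S"
  shows "cinner (integral S f) y = integral S (\<lambda>s. cinner (f s) y)"
  using integral_linear[OF assms bounded_linear_cinner_left, of y] by (simp add: o_def)

lemma cinner_integral_scaleC_left:
  fixes c :: "real \<Rightarrow> complex" and f :: "real \<Rightarrow> 'a::complex_hilbert"
  assumes "continuous_on {a..b} c" and "continuous_on {a..b} f"
  shows "cinner (integral {a..b} (\<lambda>s. c s *\<^sub>C f s)) y = integral {a..b} (\<lambda>s. c s * cinner (f s) y)"
proof -
  have "(\<lambda>s. c s *\<^sub>C f s) integrable_on {a..b}"
    by (rule integrable_continuous_real bounded_bilinear.continuous_on[OF bounded_bilinear_scaleC assms])+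
  then show ?thesis
    by (simp add: cinner_integral_left cinner_scaleC_left)
qed

lemma cinner_split_projQ:
  "cinner y w = cinner y (projQ z w) + cnj (cinner w z / cinner z z) * cinner y z"
  by (simp add: projQ_def projP_def cinner_diff_right cinner_scaleC_right)

lemma cinner_projQ_left_self: "cinner (projQ z x) z = 0"
  by (cases "z = 0")
     (simp_all add: projQ_def projP_def cinner_diff_left cinner_scaleC_left cinner_self_eq_zero)

lemma bounded_clinear_op_imp_bounded_linear:
  assumes "bounded_clinear_op T"
  shows "bounded_linear T"
proof -
  from assms obtain C where add: "\<And>x y. T (x + y) = T x + T y"
    and scale: "\<And>c x. T (c *\<^sub>C x) = c *\<^sub>C T x" and bound: "\<And>x. norm (T x) \<le> C * norm x"
    unfolding bounded_clinear_op_def by blast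
  show ?thesis
    by (rule bounded_linear_intro[of _ C]) (simp_all add: add scale bound scaleR_scaleC mult.commute)
qed

section \<open>Differentiating parameter integrals and convolutions\<close>

lemma has_vector_derivative_integral_upper_param:
  fixes f fx :: "real \<Rightarrow> real \<Rightarrow> 'a::banach"
  assumes fx: "\<And>x u. x \<in> {a..b} \<Longrightarrow> u \<in> {a..b} \<Longrightarrow>
      ((\<lambda>x. f x u) has_vector_derivative fx x u) (at x within {a..b})"
    and f_cont: "continuous_on ({a..b} \<times> {a..b}) (\<lambda>(x, u). f x u)"
    and fx_cont: "continuous_on ({a..b} \<times> {a..b}) (\<lambda>(x, u). fx x u)"
    and t: "t \<in> {a..b}"
  shows "((\<lambda>x. integral {a..x} (f x)) has_vector_derivative f t t + integral {a..t} (fx t))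
           (at t within {a..b})"
proof -
  note [continuous_intros] =
    continuous_on_compose2[OF f_cont, where f="\<lambda>u. Pair x u" for x, unfolded split_beta fst_conv snd_conv]
  have param: "((\<lambda>x. integral (cbox a t) (f x)) has_vector_derivative integral (cbox a t) (fx t))
      (at t within {a..b})"
  proof (rule leibniz_rule_vector_derivative)
    show "continuous_on ({a..b} \<times> cbox a t) (\<lambda>(x, u). fx x u)"
      by (rule continuous_on_subset[OF fx_cont]) (use t in auto)
  qed (use t fx in \<open>auto intro!: integrable_continuous_real continuous_intros\<close>)
  have upper: "((\<lambda>y. integral {a..y} (f x)) has_derivative blinfun_apply (blinfun_scaleR_left (f x y)))
      (at y within {a..b})" if "x \<in> {a..b}" "y \<in> {a..b}" for x y
    unfolding has_vector_derivative_eq_has_derivative_blinfun[symmetric]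
    by (rule integral_has_vector_derivative) (use that in \<open>auto intro!: continuous_intros\<close>)
  \<comment> \<open>The integral is \<open>G x x\<close> for \<open>G x y = integral {a..y} (f x)\<close>. The partial derivative of \<open>G\<close> in \<open>y\<close>
    is \<open>f\<close> itself, so only \<open>f\<close> has to be jointly continuous for \<open>G\<close> to be differentiable.\<close>
  have joint: "((\<lambda>(x, y). integral {a..y} (f x)) has_derivative
      (\<lambda>(dx, dy). dx *\<^sub>R integral {a..t} (fx t) + dy *\<^sub>R f t t)) (at (t, t) within {a..b} \<times> {a..b})"
  proof (rule has_derivative_eq_rhs[OF has_derivative_partialsI[OF _ upper]])
    show "((\<lambda>x. integral {a..t} (f x)) has_derivative (\<lambda>dx. dx *\<^sub>R integral {a..t} (fx t)))
        (at t within {a..b})"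
      using param by (simp add: has_vector_derivative_def)
    show "continuous (at (t, t) within {a..b} \<times> {a..b}) (\<lambda>(x, y). blinfun_scaleR_left (f x y))"
    proof -
      have "continuous_on ({a..b} \<times> {a..b}) (\<lambda>(x, y). blinfun_scaleR_left (f x y))"
        using f_cont by (auto simp: split_beta intro!: continuous_intros)
      then show ?thesis
        using t by (simp add: continuous_on_eq_continuous_within)
    qed
  qed (use t in \<open>auto simp: blinfun_scaleR_left.rep_eq\<close>)
  have diag: "((\<lambda>x. (x, x)) has_derivative (\<lambda>h. (h, h))) (at t within {a..b})"
    by (auto intro!: derivative_eq_intros)
  have "((\<lambda>x. integral {a..x} (f x)) has_derivative (\<lambda>h. h *\<^sub>R (integral {a..t} (fx t) + f t t)))
      (at t within {a..b})"
    using diff_chain_within[OF diag has_derivative_subset[OF joint]]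
    by (auto simp: o_def scaleR_add_right)
  then show ?thesis
    by (simp add: has_vector_derivative_def add.commute)
qed

lemma integral_reflect_Icc_real:
  fixes f :: "real \<Rightarrow> 'a::banach"
  shows "integral {a..b} (\<lambda>s. f (a + b - s)) = integral {a..b} f"
proof -
  have "integral {-b - c..-a - c} (\<lambda>s. f (- (s + c))) = integral {-b..-a} (\<lambda>s. f (- s))" for c
    by (rule integral_shift_real_ivl)
  from this[of "- (a + b)"] show ?thesis
    by (simp add: algebra_simps)
qed

lemma C1_extension_left:
  fixes \<Phi> \<phi> :: "real \<Rightarrow> 'a::banach"
  assumes \<phi>: "continuous_on {0..T} \<phi>"
    and \<Phi>: "\<And>s. s \<in> {0..T} \<Longrightarrow> (\<Phi> has_vector_derivative \<phi> s) (at s within {0..T})"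
  obtains \<Phi>e \<phi>e
  where "\<And>v. v \<in> {-T..T} \<Longrightarrow> (\<Phi>e has_vector_derivative \<phi>e v) (at v within {-T..T})"
    and "continuous_on {-T..T} \<phi>e"
    and "\<And>v. v \<in> {0..T} \<Longrightarrow> \<Phi>e v = \<Phi> v \<and> \<phi>e v = \<phi> v"
proof
  define \<phi>e where "\<phi>e v = \<phi> (max 0 v)" for v
  show \<phi>e_cont: "continuous_on {-T..T} \<phi>e"
    unfolding \<phi>e_def by (rule continuous_on_compose2[OF \<phi>]) (auto intro!: continuous_intros)
  define \<Phi>e where "\<Phi>e v = \<Phi> 0 + integral {-T..v} \<phi>e - integral {-T..0} \<phi>e" for v
  show "(\<Phi>e has_vector_derivative \<phi>e v) (at v within {-T..T})" if "v \<in> {-T..T}" for v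
    unfolding \<Phi>e_def[abs_def]
    by (rule derivative_eq_intros integral_has_vector_derivative[OF \<phi>e_cont that] refl)+ simp
  show "\<Phi>e v = \<Phi> v \<and> \<phi>e v = \<phi> v" if v: "v \<in> {0..T}" for v
  proof
    have "integral {-T..0} \<phi>e + integral {0..v} \<phi>e = integral {-T..v} \<phi>e"
      by (rule Henstock_Kurzweil_Integration.integral_combine)
         (use v in \<open>auto intro!: integrable_continuous_real continuous_on_subset[OF \<phi>e_cont]\<close>)
    moreover have "integral {0..v} \<phi>e = \<Phi> v - \<Phi> 0"
    proof -
      have "(\<phi> has_integral \<Phi> v - \<Phi> 0) {0..v}"
        by (rule fundamental_theorem_of_calculus)
           (use v in \<open>auto intro!: has_vector_derivative_within_subset[OF \<Phi>]\<close>)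
      moreover have "integral {0..v} \<phi>e = integral {0..v} \<phi>"
        by (rule integral_cong) (simp add: \<phi>e_def)
      ultimately show ?thesis
        by (simp add: integral_unique)
    qed
    ultimately show "\<Phi>e v = \<Phi> v"
      by (simp add: \<Phi>e_def algebra_simps)
    show "\<phi>e v = \<phi> v"
      using v by (simp add: \<phi>e_def)
  qed
qed

lemma has_vector_derivative_convolution:
  fixes K \<Phi> \<phi> :: "real \<Rightarrow> 'a::{real_normed_algebra,banach}"
  assumes K: "continuous_on {0..T} K" and \<phi>: "continuous_on {0..T} \<phi>"
    and \<Phi>: "\<And>s. s \<in> {0..T} \<Longrightarrow> (\<Phi> has_vector_derivative \<phi> s) (at s within {0..T})"
    and t: "t \<in> {0..T}"
  shows "((\<lambda>x. integral {0..x} (\<lambda>s. K (x - s) * \<Phi> s)) has_vector_derivative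
           K t * \<Phi> 0 + integral {0..t} (\<lambda>s. K (t - s) * \<phi> s)) (at t within {0..T})"
proof -
  \<comment> \<open>After the substitution \<open>u = x - s\<close> the integrand \<open>K u * \<Phi> (x - u)\<close> has to be differentiable
    in \<open>x\<close> on the whole square \<open>[0, T]\<^sup>2\<close>, where \<open>x - u\<close> may be negative.\<close>
  obtain \<Phi>e \<phi>e :: "real \<Rightarrow> 'a"
    where \<Phi>e: "\<And>v. v \<in> {-T..T} \<Longrightarrow> (\<Phi>e has_vector_derivative \<phi>e v) (at v within {-T..T})"
    and \<phi>e_cont: "continuous_on {-T..T} \<phi>e"
    and ext: "\<And>v. v \<in> {0..T} \<Longrightarrow> \<Phi>e v = \<Phi> v \<and> \<phi>e v = \<phi> v"
    using C1_extension_left[OF \<phi> \<Phi>] by blast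
  have \<Phi>e_cont: "continuous_on {-T..T} \<Phi>e"
    by (rule continuous_on_vector_derivative[OF \<Phi>e])
  have cont: "continuous_on ({0..T} \<times> {0..T}) (\<lambda>(x, u). K u * F (x - u))"
    if "continuous_on {-T..T} F" for F :: "real \<Rightarrow> 'a"
    unfolding case_prod_beta
    by (intro continuous_intros continuous_on_compose2[OF K] continuous_on_compose2[OF that]) auto
  have D: "((\<lambda>x. integral {0..x} (\<lambda>u. K u * \<Phi>e (x - u))) has_vector_derivative
      K t * \<Phi>e (t - t) + integral {0..t} (\<lambda>u. K u * \<phi>e (t - u))) (at t within {0..T})"
  proof (rule has_vector_derivative_integral_upper_param[OF _ cont[OF \<Phi>e_cont] cont[OF \<phi>e_cont] t])
    fix x u assume x: "x \<in> {0..T}" and u: "u \<in> {0..T}"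
    have "((\<lambda>x. x - u) has_vector_derivative 1) (at x within {0..T})"
      by (auto intro!: derivative_eq_intros)
    moreover have "(\<Phi>e has_vector_derivative \<phi>e (x - u)) (at (x - u) within (\<lambda>x. x - u) ` {0..T})"
      by (rule has_vector_derivative_within_subset[OF \<Phi>e]) (use x u in auto)
    ultimately have "((\<Phi>e \<circ> (\<lambda>x. x - u)) has_vector_derivative 1 *\<^sub>R \<phi>e (x - u)) (at x within {0..T})"
      by (rule vector_diff_chain_within)
    then have "((\<lambda>x. \<Phi>e (x - u)) has_vector_derivative \<phi>e (x - u)) (at x within {0..T})"
      by (simp add: o_def)
    then show "((\<lambda>x. K u * \<Phi>e (x - u)) has_vector_derivative K u * \<phi>e (x - u)) (at x within {0..T})"
      by (rule has_vector_derivative_mult_right)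
  qed
  have flip: "integral {0..x} (\<lambda>u. K u * Fe (x - u)) = integral {0..x} (\<lambda>s. K (x - s) * F s)"
    if "x \<in> {0..T}" "\<And>s. s \<in> {0..T} \<Longrightarrow> Fe s = F s" for x and Fe F :: "real \<Rightarrow> 'a"
  proof -
    have "integral {0..x} (\<lambda>u. K u * Fe (x - u)) = integral {0..x} (\<lambda>s. K (x - s) * Fe s)"
      using integral_reflect_Icc_real[of 0 x "\<lambda>u. K u * Fe (x - u)", symmetric] by simp
    also have "\<dots> = integral {0..x} (\<lambda>s. K (x - s) * F s)"
      by (rule integral_cong) (use that in auto)
    finally show ?thesis .
  qed
  have "((\<lambda>x. integral {0..x} (\<lambda>s. K (x - s) * \<Phi> s)) has_vector_derivative
      K t * \<Phi>e (t - t) + integral {0..t} (\<lambda>u. K u * \<phi>e (t - u))) (at t within {0..T})"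
    by (rule has_vector_derivative_transform[OF t _ D], rule flip[symmetric]) (use ext in auto)
  moreover have "integral {0..t} (\<lambda>u. K u * \<phi>e (t - u)) = integral {0..t} (\<lambda>s. K (t - s) * \<phi> s)"
    by (rule flip) (use t ext in auto)
  ultimately show ?thesis
    using ext[of 0] t by simp
qed

lemma linear_ode_initial_zero:
  fixes y :: "real \<Rightarrow> 'a::{real_normed_field,banach}"
  assumes y': "\<And>x. x \<in> {0..T} \<Longrightarrow> (y has_vector_derivative b * y x) (at x within {0..T})"
    and y0: "y 0 = 0" and t: "t \<in> {0..T}"
  shows "y t = 0"
proof -
  define E where "E x = exp (- b * of_real x) * y x" for x
  have E': "(E has_vector_derivative 0) (at x within {0..T})" if x: "x \<in> {0..T}" for x
  proof -
    have "((\<lambda>x. exp (- b * of_real x)) has_vector_derivative exp (- b * of_real x) * - b)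
        (at x within {0..T})"
      by (rule has_vector_derivative_real_field) (auto intro!: derivative_eq_intros)
    from has_vector_derivative_mult[OF this y'[OF x]] show ?thesis
      by (simp add: E_def[abs_def] algebra_simps)
  qed
  obtain c where "\<And>x. x \<in> {0..T} \<Longrightarrow> E x = c"
    using has_vector_derivative_zero_constant[OF convex_real_interval(5) E'] by metis
  moreover have "0 \<in> {0..T}"
    using t by simp
  ultimately have "E t = E 0"
    using t by metis
  then show ?thesis
    by (simp add: E_def y0)
qed

lemma linear_ode_solution_eq_convolution:
  fixes h g a c K :: "real \<Rightarrow> 'a::{real_normed_field,banach}"
  assumes h': "\<And>x. x \<in> {0..T} \<Longrightarrow> (h has_vector_derivative a x + b * h x) (at x within {0..T})"
    and g': "\<And>x. x \<in> {0..T} \<Longrightarrow> (g has_vector_derivative c x + b * g x) (at x within {0..T})"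
    and h0: "h 0 = 0" and g0: "g 0 = 1"
    and c: "continuous_on {0..T} c" and K: "continuous_on {0..T} K"
    and volterra: "\<And>x. x \<in> {0..T} \<Longrightarrow> K x = a x - integral {0..x} (\<lambda>s. K (x - s) * c s)"
    and t: "t \<in> {0..T}"
  shows "h t = integral {0..t} (\<lambda>s. K (t - s) * g s)"
proof -
  define m where "m x = integral {0..x} (\<lambda>s. K (x - s) * g s)" for x
  have g: "continuous_on {0..T} g"
    by (rule continuous_on_vector_derivative[OF g'])
  have m': "(m has_vector_derivative a x + b * m x) (at x within {0..T})" if x: "x \<in> {0..T}" for x
  proof -
    have "(\<lambda>s. K (x - s) * f s) integrable_on {0..x}" if "continuous_on {0..T} f" for f
      by (intro integrable_continuous_real continuous_intros continuous_on_compose2[OF K]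
          continuous_on_subset[OF that]) (use x in auto)
    from this[OF c] this[OF g]
    have "integral {0..x} (\<lambda>s. K (x - s) * (c s + b * g s))
        = integral {0..x} (\<lambda>s. K (x - s) * c s) + b * m x"
      by (simp add: m_def distrib_left mult.left_commute integral_add integrable_on_mult_right)
    moreover have "(m has_vector_derivative K x * g 0 + integral {0..x} (\<lambda>s. K (x - s) * (c s + b * g s)))
        (at x within {0..T})"
      unfolding m_def[abs_def] using c g g' x
      by (intro has_vector_derivative_convolution K continuous_intros)
    ultimately show ?thesis
      using volterra[OF x] by (simp add: g0)
  qed
  have "h t - m t = 0"
  proof (rule linear_ode_initial_zero[OF _ _ t])
    show "((\<lambda>x. h x - m x) has_vector_derivative b * (h x - m x)) (at x within {0..T})"
      if "x \<in> {0..T}" for x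
      using has_vector_derivative_diff[OF h'[OF that] m'[OF that]] by (simp add: algebra_simps)
  qed (simp add: h0 m_def)
  then show ?thesis
    by (simp add: m_def)
qed


section \<open>Strongly continuous semigroups\<close>

lemma tendsto_right_difference_quotient:
  fixes f :: "real \<Rightarrow> 'a::real_normed_vector"
  assumes "t < b" and f': "(f has_vector_derivative D) (at t within {t..b})"
  shows "((\<lambda>h. (1 / h) *\<^sub>R (f (t + h) - f t)) \<longlongrightarrow> D) (at_right 0)"
proof -
  have "((\<lambda>y. ((f y - f t) - (y - t) *\<^sub>R D) /\<^sub>R norm (y - t)) \<longlongrightarrow> 0) (at_right t)"
    using f' \<open>t < b\<close> by (simp add: has_vector_derivative_def has_derivative_at_within at_within_Icc_at_right)
  then have "((\<lambda>h. ((f (t + h) - f t) - h *\<^sub>R D) /\<^sub>R norm h) \<longlongrightarrow> 0) (at_right 0)"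
    by (simp add: at_right_to_0[of t] filterlim_filtermap add.commute)
  moreover have "\<forall>\<^sub>F h in at_right 0.
      ((f (t + h) - f t) - h *\<^sub>R D) /\<^sub>R norm h = (1 / h) *\<^sub>R (f (t + h) - f t) - D"
    by (rule eventually_at_rightI[of 0 1]) (simp_all add: scaleR_diff_right inverse_eq_divide)
  ultimately show ?thesis
    by (rule LIM_zero_cancel[OF Lim_transform_eventually])
qed

lemma semigroup_bounded_linear:
  "strongly_continuous_semigroup U \<Longrightarrow> t \<ge> 0 \<Longrightarrow> bounded_linear (U t)"
  unfolding strongly_continuous_semigroup_def using bounded_clinear_op_imp_bounded_linear by blast

lemma semigroup_zero: "strongly_continuous_semigroup U \<Longrightarrow> U 0 x = x"
  unfolding strongly_continuous_semigroup_def by simp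

lemma semigroup_add:
  "strongly_continuous_semigroup U \<Longrightarrow> s \<ge> 0 \<Longrightarrow> t \<ge> 0 \<Longrightarrow> U (s + t) x = U s (U t x)"
  unfolding strongly_continuous_semigroup_def by simp

lemma semigroup_continuous_on:
  "strongly_continuous_semigroup U \<Longrightarrow> continuous_on {0..} (\<lambda>t. U t x)"
  unfolding strongly_continuous_semigroup_def by simp

lemma semigroup_integrable_on:
  "strongly_continuous_semigroup U \<Longrightarrow> 0 \<le> a \<Longrightarrow> (\<lambda>s. U s x) integrable_on {a..b}"
  by (rule integrable_continuous_real, rule continuous_on_subset[OF semigroup_continuous_on]) auto

lemma continuous_on_cinner_semigroup:
  "strongly_continuous_semigroup U \<Longrightarrow> continuous_on {0..} (\<lambda>t. cinner (U t x) y)"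
  by (rule bounded_linear.continuous_on[OF bounded_linear_cinner_left semigroup_continuous_on])

lemma semigroup_integral_shift:
  assumes sg: "strongly_continuous_semigroup U" and "h \<ge> 0" "t \<ge> 0"
  shows "U h (integral {0..t} (\<lambda>s. U s x)) = integral {h..t + h} (\<lambda>s. U s x)"
proof -
  have "U h (integral {0..t} (\<lambda>s. U s x)) = integral {0..t} (\<lambda>s. U h (U s x))"
    using integral_linear[OF semigroup_integrable_on[OF sg] semigroup_bounded_linear[OF sg]] assms
    by (simp add: o_def)
  also have "\<dots> = integral {0..t} (\<lambda>s. U (s + h) x)"
  proof (rule integral_cong)
    fix s assume "s \<in> {0..t}"
    then show "U h (U s x) = U (s + h) x"
      using semigroup_add[OF sg, of h s x] assms by (simp add: add.commute)
  qed
  also have "\<dots> = integral {h..t + h} (\<lambda>s. U s x)"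
    using integral_shift_real_ivl[of h h "t + h" "\<lambda>s. U s x"] by simp
  finally show ?thesis .
qed

lemma
  fixes U :: "real \<Rightarrow> 'a::complex_hilbert \<Rightarrow> 'a"
  assumes sg: "strongly_continuous_semigroup U" and t: "t \<ge> 0"
  shows integral_semigroup_in_gen_dom: "integral {0..t} (\<lambda>s. U s x) \<in> gen_dom U"
    and gen_integral_semigroup: "gen U (integral {0..t} (\<lambda>s. U s x)) = U t x - x"
proof -
  define \<Phi> where "\<Phi> a = integral {0..a} (\<lambda>s. U s x)" for a
  have \<Phi>': "(\<Phi> has_vector_derivative U a x) (at a within {a..a + 1})" if "a \<ge> 0" for a
  proof -
    have "(\<Phi> has_vector_derivative U a x) (at a within {0..a + 1})"
      unfolding \<Phi>_def
      by (rule integral_has_vector_derivative, rule continuous_on_subset[OF semigroup_continuous_on[OF sg]])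
         (use that in auto)
    then show ?thesis
      by (rule has_vector_derivative_within_subset) (use that in auto)
  qed
  \<comment> \<open>The orbit integral is moved by \<open>U h\<close> to a shifted window, so its difference quotient is a
    difference of two difference quotients of \<open>\<Phi>\<close>.\<close>
  have quotient: "(1 / h) *\<^sub>R (U h (\<Phi> t) - \<Phi> t)
      = (1 / h) *\<^sub>R (\<Phi> (t + h) - \<Phi> t) - (1 / h) *\<^sub>R (\<Phi> (0 + h) - \<Phi> 0)" if "h > 0" for h
  proof -
    have "\<Phi> h + integral {h..t + h} (\<lambda>s. U s x) = \<Phi> (t + h)"
      unfolding \<Phi>_def
      by (rule Henstock_Kurzweil_Integration.integral_combine)
         (use that t semigroup_integrable_on[OF sg] in auto)
    then show ?thesis
      using semigroup_integral_shift[OF sg, of h t x] that t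
      by (simp add: \<Phi>_def algebra_simps flip: scaleR_diff_right)
  qed
  have "((\<lambda>h. (1 / h) *\<^sub>R (\<Phi> (a + h) - \<Phi> a)) \<longlongrightarrow> U a x) (at_right 0)" if "a \<ge> 0" for a
    by (rule tendsto_right_difference_quotient[OF _ \<Phi>'[OF that]]) simp
  from tendsto_diff[OF this[OF t] this[of 0, OF order_refl]]
  have "((\<lambda>h. (1 / h) *\<^sub>R (\<Phi> (t + h) - \<Phi> t) - (1 / h) *\<^sub>R (\<Phi> (0 + h) - \<Phi> 0))
      \<longlongrightarrow> U t x - x) (at_right 0)"
    using t by (simp add: semigroup_zero[OF sg])
  moreover have "\<forall>\<^sub>F h in at_right 0. (1 / h) *\<^sub>R (\<Phi> (t + h) - \<Phi> t) - (1 / h) *\<^sub>R (\<Phi> (0 + h) - \<Phi> 0)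
      = (1 / h) *\<^sub>R (U h (\<Phi> t) - \<Phi> t)"
    by (rule eventually_at_rightI[of 0 1]) (simp_all add: quotient)
  ultimately have lim: "((\<lambda>h. (1 / h) *\<^sub>R (U h (\<Phi> t) - \<Phi> t)) \<longlongrightarrow> U t x - x) (at_right 0)"
    by (rule Lim_transform_eventually)
  then show "integral {0..t} (\<lambda>s. U s x) \<in> gen_dom U"
    unfolding gen_dom_def \<Phi>_def by blast
  show "gen U (integral {0..t} (\<lambda>s. U s x)) = U t x - x"
    unfolding gen_def using tendsto_Lim[OF trivial_limit_at_right_real lim] by (simp add: \<Phi>_def)
qed

lemma cinner_gen_adj:
  assumes "z \<in> gen_adj_dom U" and "x \<in> gen_dom U"
  shows "cinner (gen U x) z = cinner x (gen_adj U z)"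
proof -
  have "\<exists>w. \<forall>x\<in>gen_dom U. cinner (gen U x) z = cinner x w"
    using assms(1) by (simp add: gen_adj_dom_def)
  then have "\<forall>x\<in>gen_dom U. cinner (gen U x) z = cinner x (gen_adj U z)"
    unfolding gen_adj_def by (rule someI_ex)
  then show ?thesis
    using assms(2) by blast
qed

lemma has_vector_derivative_cinner_semigroup:
  fixes U :: "real \<Rightarrow> 'a::complex_hilbert \<Rightarrow> 'a"
  assumes sg: "strongly_continuous_semigroup U" and z: "z \<in> gen_adj_dom U" and t: "t \<in> {0..T}"
  shows "((\<lambda>t. cinner (U t x) z) has_vector_derivative cinner (U t x) (gen_adj U z))
           (at t within {0..T})"
proof -
  define \<psi> where "\<psi> s = cinner (U s x) (gen_adj U z)" for s
  have \<psi>_cont: "continuous_on {0..T} \<psi>"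
    unfolding \<psi>_def by (rule continuous_on_subset[OF continuous_on_cinner_semigroup[OF sg]]) auto
  \<comment> \<open>\<open>x\<close> need not lie in the domain of the generator, but its orbit integrals do.\<close>
  have eq: "cinner (U s x) z = cinner x z + integral {0..s} \<psi>" if s: "s \<in> {0..T}" for s
  proof -
    have "cinner (U s x) z - cinner x z = cinner (gen U (integral {0..s} (\<lambda>r. U r x))) z"
      using s by (simp add: gen_integral_semigroup[OF sg] cinner_diff_left)
    also have "\<dots> = integral {0..s} \<psi>"
      using s by (simp add: cinner_gen_adj[OF z] integral_semigroup_in_gen_dom[OF sg]
          cinner_integral_left[OF semigroup_integrable_on[OF sg]] \<psi>_def[abs_def])
    finally show ?thesis
      by (simp add: algebra_simps)
  qed
  have "((\<lambda>s. cinner x z + integral {0..s} \<psi>) has_vector_derivative \<psi> t) (at t within {0..T})"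
    by (rule derivative_eq_intros integral_has_vector_derivative[OF \<psi>_cont t] refl)+ simp
  from has_vector_derivative_transform[OF t eq this] show ?thesis
    by (simp add: \<psi>_def)
qed

theorem corollary2:
  fixes U :: "real \<Rightarrow> 'a::complex_hilbert \<Rightarrow> 'a"
    and z :: 'a
    and K :: "real \<Rightarrow> complex"
    and \<eta> :: "real \<Rightarrow> 'a"
  assumes sg: "strongly_continuous_semigroup U"
    and zdom: "z \<in> gen_dom U" "z \<in> gen_adj_dom U"
    and znz: "z \<noteq> 0"
    and Kcont: "continuous_on {0..} K"
    and Keq: "\<forall>t\<ge>0. K t =
        cinner (U t (projQ z (gen U z))) (projQ z (gen_adj U z)) / cinner z z
        - integral {0..t} (\<lambda>s. K (t - s) * (cinner (U s z) (projQ z (gen_adj U z)) / cinner z z))"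
    and eta: "\<forall>t\<ge>0. \<eta> t = U t (projQ z (gen U z)) - integral {0..t} (\<lambda>s. K (t - s) *\<^sub>C U s z)"
  shows "\<forall>t\<ge>0. cinner (\<eta> t) z = 0"
proof (intro allI impI)
  fix T :: real
  assume "T \<ge> 0"
  define N where "N = cinner z z"
  define q where "q = projQ z (gen_adj U z)"
  define x0 where "x0 = projQ z (gen U z)"
  have N: "N \<noteq> 0"
    using znz by (simp add: N_def cinner_self_eq_zero)
  have ode: "((\<lambda>t. cinner (U t x) z / N) has_vector_derivative
      cinner (U s x) q / N + cnj (cinner (gen_adj U z) z / N) * (cinner (U s x) z / N)) (at s within {0..T})"
    if "s \<in> {0..T}" for x s
    using has_vector_derivative_divide[OF has_vector_derivative_cinner_semigroup[OF sg zdom(2) that], where a=N]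
    by (simp add: cinner_split_projQ[of _ "gen_adj U z" z] N_def q_def add_divide_distrib)
  have "cinner (U T x0) z / N = integral {0..T} (\<lambda>s. K (T - s) * (cinner (U s z) z / N))"
  proof (rule linear_ode_solution_eq_convolution[OF ode ode])
    show "continuous_on {0..T} (\<lambda>s. cinner (U s z) q / N)"
      by (intro continuous_intros continuous_on_subset[OF continuous_on_cinner_semigroup[OF sg]])
         (use N in auto)
    show "K x = cinner (U x x0) q / N - integral {0..x} (\<lambda>s. K (x - s) * (cinner (U s z) q / N))"
      if "x \<in> {0..T}" for x
      using Keq that by (simp add: N_def q_def x0_def)
  qed (use \<open>T \<ge> 0\<close> N in \<open>auto simp: semigroup_zero[OF sg] x0_def cinner_projQ_left_self N_def
        intro: continuous_on_subset[OF Kcont]\<close>)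
  then have "cinner (U T x0) z = integral {0..T} (\<lambda>s. K (T - s) * cinner (U s z) z)"
    using N by simp
  moreover have "cinner (integral {0..T} (\<lambda>s. K (T - s) *\<^sub>C U s z)) z
      = integral {0..T} (\<lambda>s. K (T - s) * cinner (U s z) z)"
    by (rule cinner_integral_scaleC_left) (auto intro!: continuous_on_compose2[OF Kcont] continuous_intros
        continuous_on_subset[OF semigroup_continuous_on[OF sg]])
  ultimately show "cinner (\<eta> T) z = 0"
    using eta \<open>T \<ge> 0\<close> by (simp add: cinner_diff_left x0_def)
qed

end
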